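(* Let $q:\mathbb{R}\to\mathbb{R}$ be infinitely differentiable and strictly positive, let $p(t)=\frac1{q(t)}\left(\frac54\left(\frac{q'(t)}{q(t)}\right)^2-\frac{q''(t)}{q(t)}\right)$, and suppose there are real numbers $\eta_1>0$, $\eta_2>0$ with $\eta_1\le q(t)\le\eta_2$, $|p(t)|\le\eta_2$ and $|q'(t)|\le\eta_2$ for all $0\le t\le1$. Let $k=20\left(\frac{\eta_2}{\eta_1}\right)^2+8\eta_2^2+10\frac{\eta_2}{\eta_1}+1$, and let $\epsilon$ be a real number with $0<\epsilon<\eta_1/2$. Suppose $p_b:[0,1]\to\mathbb{R}$ is infinitely differentiable with $\sup_{0\le t\le1}|p(t)-p_b(t)|\le\epsilon e^{-k}$. Then there exists an infinitely differentiable $q_b:[0,1]\to\mathbb{R}$ such that $$\frac1{q_b(t)}\left(\frac54\left(\frac{q_b'(t)}{q_b(t)}\right)^2-\frac{q_b''(t)}{q_b(t)}\right)=p_b(t)\quad\text{for all }0\le t\le1$$ and $\sup_{0\le t\le1}|q(t)-q_b(t)|\le\epsilon$. *)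

theory Defs
  imports "HOL-Analysis.Analysis"
begin

definition deriv_seq :: "real set \<Rightarrow> (real \<Rightarrow> real) \<Rightarrow> (nat \<Rightarrow> real \<Rightarrow> real) \<Rightarrow> bool" where
  "deriv_seq S f D \<longleftrightarrow> D 0 = f \<and>
     (\<forall>n. \<forall>x\<in>S. (D n has_real_derivative D (Suc n) x) (at x within S))"

definition smooth_on :: "real set \<Rightarrow> (real \<Rightarrow> real) \<Rightarrow> bool" where
  "smooth_on S f \<longleftrightarrow> (\<exists>D. deriv_seq S f D)"

end

theory Submission
  imports Defs
begin

text \<open>
  The substitution \<open>q = y\<^sup>-\<^sup>4\<close> linearises the operator of the theorem:
  \<open>potential q q' q'' = 4 y\<^sup>3 y''\<close>.  So \<open>y = q\<^sup>-\<^sup>1\<^sup>/\<^sup>4\<close> solves \<open>y'' = p / (4 y\<^sup>3)\<close>, and it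
  suffices to solve the perturbed initial value problem \<open>z'' = pb / (4 z\<^sup>3)\<close>,
  \<open>z 0 = y 0\<close>, \<open>z' 0 = y' 0\<close> and to take \<open>qb = z\<^sup>-\<^sup>4\<close>.
\<close>

subsection \<open>Finite-order differentiability\<close>

text \<open>Unlike \<open>deriv_seq\<close> it does not name the
  derivatives, which makes closure under sums, products and inverses easy to prove.\<close>

fun Ck_on :: "real set \<Rightarrow> nat \<Rightarrow> (real \<Rightarrow> real) \<Rightarrow> bool" where
  "Ck_on S 0 f = True"
| "Ck_on S (Suc n) f =
     (\<exists>f'. (\<forall>x\<in>S. (f has_real_derivative f' x) (at x within S)) \<and> Ck_on S n f')"

lemma Ck_on_Suc_imp: "Ck_on S (Suc n) f \<Longrightarrow> Ck_on S n f"
proof (induction n arbitrary: f)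
  case 0
  then show ?case by simp
next
  case (Suc n)
  then obtain f' where "\<forall>x\<in>S. (f has_real_derivative f' x) (at x within S)" "Ck_on S (Suc n) f'"
    by auto
  then show ?case using Suc.IH by auto
qed

lemma Ck_on_const: "Ck_on S n (\<lambda>x. a)"
proof (induction n arbitrary: a)
  case 0
  then show ?case by simp
next
  case (Suc n)
  show ?case by (auto intro!: exI[of _ "\<lambda>x. 0"] Suc derivative_eq_intros)
qed

lemma Ck_on_add: "Ck_on S n f \<Longrightarrow> Ck_on S n g \<Longrightarrow> Ck_on S n (\<lambda>x. f x + g x)"
proof (induction n arbitrary: f g)
  case 0
  then show ?case by simp
next
  case (Suc n)
  then obtain f' g' where f: "\<forall>x\<in>S. (f has_real_derivative f' x) (at x within S)" "Ck_on S n f'"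
    and g: "\<forall>x\<in>S. (g has_real_derivative g' x) (at x within S)" "Ck_on S n g'"
    by auto
  have "\<forall>x\<in>S. ((\<lambda>x. f x + g x) has_real_derivative f' x + g' x) (at x within S)"
    using f(1) g(1) by (auto intro!: DERIV_add)
  then show ?case by (auto intro!: exI[of _ "\<lambda>x. f' x + g' x"] Suc.IH f g)
qed

lemma Ck_on_mult: "Ck_on S n f \<Longrightarrow> Ck_on S n g \<Longrightarrow> Ck_on S n (\<lambda>x. f x * g x)"
proof (induction n arbitrary: f g)
  case 0
  then show ?case by simp
next
  case (Suc n)
  then obtain f' g' where f: "\<forall>x\<in>S. (f has_real_derivative f' x) (at x within S)" "Ck_on S n f'"
    and g: "\<forall>x\<in>S. (g has_real_derivative g' x) (at x within S)" "Ck_on S n g'"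
    by auto
  have fg: "Ck_on S n f" "Ck_on S n g" using Suc.prems Ck_on_Suc_imp by blast+
  have "\<forall>x\<in>S. ((\<lambda>x. f x * g x) has_real_derivative f' x * g x + f x * g' x) (at x within S)"
    using f(1) g(1) by (auto intro!: DERIV_cong[OF DERIV_mult'])
  then show ?case
    by (auto intro!: exI[of _ "\<lambda>x. f' x * g x + f x * g' x"] Ck_on_add Suc.IH f g fg)
qed

lemma Ck_on_inverse: "Ck_on S n f \<Longrightarrow> (\<forall>x\<in>S. f x \<noteq> 0) \<Longrightarrow> Ck_on S n (\<lambda>x. inverse (f x))"
proof (induction n arbitrary: f)
  case 0
  then show ?case by simp
next
  case (Suc n)
  then obtain f' where f: "\<forall>x\<in>S. (f has_real_derivative f' x) (at x within S)" "Ck_on S n f'"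
    by auto
  have IH: "Ck_on S n (\<lambda>x. inverse (f x))"
    using Suc.IH Suc.prems Ck_on_Suc_imp by blast
  let ?f' = "\<lambda>x. (- 1) * f' x * (inverse (f x) * inverse (f x))"
  have "\<forall>x\<in>S. ((\<lambda>x. inverse (f x)) has_real_derivative ?f' x) (at x within S)"
    using f Suc.prems by (auto intro!: derivative_eq_intros simp: field_simps power2_eq_square)
  then show ?case by (auto intro!: exI[of _ ?f'] Ck_on_mult Ck_on_const f IH)
qed

lemma Ck_on_cong: "Ck_on S n f \<Longrightarrow> (\<forall>x\<in>S. f x = g x) \<Longrightarrow> Ck_on S n g"
proof (cases n)
  case (Suc m)
  assume "Ck_on S n f" and fg: "\<forall>x\<in>S. f x = g x"
  then obtain f' where f: "\<forall>x\<in>S. (f has_real_derivative f' x) (at x within S)" "Ck_on S m f'"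
    using Suc by auto
  have "\<forall>x\<in>S. (g has_real_derivative f' x) (at x within S)"
    using f(1) fg by (auto intro: has_field_derivative_transform_within[where d=1])
  then show ?thesis using Suc f(2) by auto
qed simp

lemma deriv_seq_Ck_on: "deriv_seq S f D \<Longrightarrow> Ck_on S n (D m)"
proof (induction n arbitrary: m)
  case 0
  then show ?case by simp
next
  case (Suc n)
  then show ?case unfolding deriv_seq_def by (auto intro!: exI[of _ "D (Suc m)"])
qed

lemma smooth_on_continuous_on: "smooth_on S f \<Longrightarrow> continuous_on S f"
  unfolding smooth_on_def deriv_seq_def by (metis DERIV_continuous_on)

text \<open>On a nondegenerate closed interval one-sided derivatives are unique; this is what
  allows the derivatives of a \<open>Ck_on\<close> function to be chosen once and for all.\<close>

lemma has_real_derivative_unique_interval: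
  assumes "a < b" "x \<in> {a..b}"
    and "(f has_real_derivative d1) (at x within {a..b})"
    and "(f has_real_derivative d2) (at x within {a..b})"
  shows "d1 = d2"
  using vector_derivative_unique_within_closed_interval[of a b x f d1 d2] assms
  by (auto simp: has_real_derivative_iff_has_vector_derivative cbox_interval)

lemma Ck_on_all_imp_smooth_on:
  assumes ab: "a < b" and Ck: "\<And>n. Ck_on {a..b} n f"
  shows "smooth_on {a..b} f"
proof -
  define D where "D = rec_nat f (\<lambda>n g x. SOME d. (g has_real_derivative d) (at x within {a..b}))"
  have D0: "D 0 = f"
    and DS: "\<And>n. D (Suc n) = (\<lambda>x. SOME d. (D n has_real_derivative d) (at x within {a..b}))"
    by (simp_all add: D_def)
  have D_Ck: "Ck_on {a..b} m (D n)" for n m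
  proof (induction n arbitrary: m)
    case 0
    then show ?case using Ck D0 by simp
  next
    case (Suc n)
    obtain f' where f': "\<forall>x\<in>{a..b}. (D n has_real_derivative f' x) (at x within {a..b})"
      "Ck_on {a..b} m f'" using Suc[of "Suc m"] by auto
    have "\<forall>x\<in>{a..b}. f' x = D (Suc n) x"
    proof
      fix x assume x: "x \<in> {a..b}"
      have "(D n has_real_derivative D (Suc n) x) (at x within {a..b})"
        unfolding DS using f'(1) x by (auto intro: someI)
      then show "f' x = D (Suc n) x" using has_real_derivative_unique_interval ab x f'(1) by blast
    qed
    then show ?case using Ck_on_cong f'(2) by blast
  qed
  have "(D n has_real_derivative D (Suc n) x) (at x within {a..b})" if "x \<in> {a..b}" for n x
  proof -
    obtain f' where "\<forall>x\<in>{a..b}. (D n has_real_derivative f' x) (at x within {a..b})"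
      using D_Ck[of "Suc 0" n] by auto
    then show ?thesis unfolding DS using that by (auto intro: someI)
  qed
  then show ?thesis using D0 unfolding smooth_on_def deriv_seq_def by blast
qed

lemma inverse_power_lipschitz:
  fixes u v c :: real
  assumes c: "0 < c" "c \<le> u" "c \<le> v"
  shows "\<bar>1 / u^n - 1 / v^n\<bar> \<le> n / c^(Suc n) * \<bar>u - v\<bar>"
proof -
  have uv: "0 < u" "0 < v" using c by auto
  have scale: "c^n * (1 / u^n - 1 / v^n) = (c / u)^n - (c / v)^n"
    by (simp add: power_divide right_diff_distrib)
  have "c / u - c / v = c * (v - u) / (u * v)"
    using uv by (simp add: field_simps)
  then have diff: "\<bar>c / u - c / v\<bar> = c * \<bar>u - v\<bar> / (u * v)"
    using uv c by (simp add: abs_mult abs_minus_commute)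
  have "c^n * \<bar>1 / u^n - 1 / v^n\<bar> = \<bar>(c / u)^n - (c / v)^n\<bar>"
    using c scale by (metis abs_mult abs_of_pos zero_less_power)
  also have "\<dots> \<le> n * \<bar>c / u - c / v\<bar>"
    using norm_power_diff[of "c / u" "c / v" n] c uv by simp
  also have "\<dots> \<le> n * (c * \<bar>u - v\<bar> / (c * c))"
    unfolding diff using c by (intro mult_left_mono divide_left_mono mult_mono) auto
  finally have "c^n * \<bar>1 / u^n - 1 / v^n\<bar> \<le> n * (\<bar>u - v\<bar> / c)"
    using c by simp
  then show ?thesis using c by (simp add: field_simps)
qed

lemma exp_weighted_integral_bound:
  fixes g :: "real \<Rightarrow> real"
  assumes lam: "0 < lam" and s: "s \<in> {0..1}" and g: "continuous_on {0..1} g"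
    and b: "\<And>r. r \<in> {0..1} \<Longrightarrow> \<bar>g r\<bar> \<le> M * exp (lam * r)"
  shows "\<bar>integral {0..s} g\<bar> \<le> M * exp (lam * s) / lam"
proof -
  have sub: "{0..s} \<subseteq> {0..1}" using s by auto
  have gi: "g integrable_on {0..s}"
    using integrable_continuous_real continuous_on_subset[OF g sub] by auto
  have "((\<lambda>r. M * exp (lam * r)) has_integral
      (M * exp (lam * s) / lam - M * exp (lam * 0) / lam)) {0..s}"
    using s lam
    by (intro fundamental_theorem_of_calculus[where f="\<lambda>r. M * exp (lam * r) / lam"])
      (auto simp: has_real_derivative_iff_has_vector_derivative[symmetric]
        intro!: derivative_eq_intros)
  then have fi: "((\<lambda>r. M * exp (lam * r)) has_integral (M * exp (lam * s) / lam - M / lam)) {0..s}"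
    by simp
  have "0 \<le> M" using b[of 0] by auto
  have "\<bar>integral {0..s} g\<bar> \<le> integral {0..s} (\<lambda>r. M * exp (lam * r))"
    using integral_norm_bound_integral[OF gi has_integral_integrable[OF fi]] b sub by auto
  also have "\<dots> = M * exp (lam * s) / lam - M / lam" using integral_unique[OF fi] .
  also have "\<dots> \<le> M * exp (lam * s) / lam" using \<open>0 \<le> M\<close> lam by simp
  finally show ?thesis .
qed

lemma exp_weighted_integral_diff_bound:
  fixes g1 g2 :: "real \<Rightarrow> real"
  assumes lam: "0 < lam" and s: "s \<in> {0..1}"
    and g: "continuous_on {0..1} g1" "continuous_on {0..1} g2"
    and b: "\<And>r. r \<in> {0..1} \<Longrightarrow> \<bar>g1 r - g2 r\<bar> \<le> M * exp (lam * r)"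
  shows "\<bar>integral {0..s} g1 - integral {0..s} g2\<bar> \<le> M * exp (lam * s) / lam"
proof -
  have sub: "{0..s} \<subseteq> {0..1}" using s by auto
  have "g1 integrable_on {0..s}" "g2 integrable_on {0..s}"
    using g by (auto intro!: integrable_continuous_real continuous_on_subset[OF _ sub])
  then have "integral {0..s} g1 - integral {0..s} g2 = integral {0..s} (\<lambda>r. g1 r - g2 r)"
    by (simp add: integral_diff)
  then show ?thesis
    using exp_weighted_integral_bound[OF lam s continuous_on_diff[OF g] b] by simp
qed

lemma antiderivative_approx:
  fixes f f' h :: "real \<Rightarrow> real"
  assumes fd: "\<And>t. t \<in> {0..1} \<Longrightarrow> (f has_real_derivative f' t) (at t within {0..1})"
    and f'c: "continuous_on {0..1} f'" and hc: "continuous_on {0..1} h"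
    and K: "\<And>r. r \<in> {0..1} \<Longrightarrow> \<bar>h r - f' r\<bar> \<le> K"
    and t: "t \<in> {0..1}"
  shows "\<bar>f 0 + integral {0..t} h - f t\<bar> \<le> K"
proof -
  have sub: "{0..t} \<subseteq> {0..1}" using t by auto
  have "(f' has_integral (f t - f 0)) {0..t}"
    using t by (intro fundamental_theorem_of_calculus)
      (auto simp: has_real_derivative_iff_has_vector_derivative[symmetric]
        intro: DERIV_subset[OF fd])
  then have "integral {0..t} f' = f t - f 0" by (rule integral_unique)
  moreover have "h integrable_on {0..t}" "f' integrable_on {0..t}"
    using hc f'c by (auto intro!: integrable_continuous_real continuous_on_subset[OF _ sub])
  ultimately have eq: "f 0 + integral {0..t} h - f t = integral {0..t} (\<lambda>r. h r - f' r)"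
    by (simp add: integral_diff)
  have "norm (integral {0..t} (\<lambda>r. h r - f' r)) \<le> K * (t - 0)"
    using t K by (intro integral_bound continuous_on_subset[OF continuous_on_diff[OF hc f'c]]) auto
  also have "\<dots> \<le> K" using t K[of 0] by (simp add: mult_left_le)
  finally show ?thesis using eq by simp
qed

subsection \<open>A second-order ODE with Lipschitz right-hand side\<close>

text \<open>Functions on \<open>[0,1]\<close> are embedded into the Banach space of bounded continuous
  functions on \<open>\<real>\<close> by composing with the clamp \<open>\<real> \<rightarrow> [0,1]\<close>.\<close>

definition clamp :: "real \<Rightarrow> real" where "clamp t = max 0 (min 1 t)"

lemma clamp_in: "clamp t \<in> {0..1}"
  by (auto simp: clamp_def)

lemma clamp_id: "t \<in> {0..1} \<Longrightarrow> clamp t = t"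
  by (auto simp: clamp_def)

lemma clamp_bcontfun:
  assumes h: "continuous_on {0..1} h"
  shows "(\<lambda>t. h (clamp t)) \<in> bcontfun"
proof -
  have "continuous_on UNIV clamp" unfolding clamp_def by (intro continuous_intros)
  then have "continuous_on UNIV (\<lambda>t. h (clamp t))"
    using continuous_on_compose2[OF h] clamp_in by blast
  moreover have "range (\<lambda>t. h (clamp t)) \<subseteq> h ` {0..1}" using clamp_in by auto
  then have "bounded (range (\<lambda>t. h (clamp t)))"
    using compact_continuous_image[OF h] compact_imp_bounded bounded_subset by blast
  ultimately show ?thesis unfolding bcontfun_def by auto
qed

text \<open>We solve \<open>z'' = G t z\<close>, \<open>z 0 = y0\<close>, \<open>z' 0 = y1\<close> on \<open>[0,1]\<close> as a fixed point of the
  Picard operator \<open>z \<mapsto> y0 + \<integral>\<^sub>0\<^sup>t (y1 + \<integral>\<^sub>0\<^sup>s G r (z r) dr) ds\<close>.  In the norm weighted by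
  \<open>exp (- lam t)\<close> (Bielecki) the operator contracts by \<open>L / lam\<^sup>2 \<le> 1/2\<close>; the same
  estimate shows that an approximate solution with defect \<open>K\<close> lies within
  \<open>2 K exp lam\<close> of the true one.\<close>

locale lipschitz_ode2 =
  fixes G :: "real \<Rightarrow> real \<Rightarrow> real" and L lam y0 y1 :: real
  assumes G_cont: "continuous_on ({0..1} \<times> UNIV) (\<lambda>(r, u). G r u)"
    and G_lip: "\<And>r u v. r \<in> {0..1} \<Longrightarrow> \<bar>G r u - G r v\<bar> \<le> L * \<bar>u - v\<bar>"
    and lam_pos: "0 < lam"
    and L_lam: "2 * L \<le> lam^2"
begin

lemma L_nonneg: "0 \<le> L"
  using G_lip[of 0 1 0] by simp

lemma G_comp_cont:
  assumes z: "continuous_on {0..1} z"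
  shows "continuous_on {0..1} (\<lambda>r. G r (z r))"
proof -
  have "continuous_on {0..1} (\<lambda>r. (r, z r))" by (intro continuous_on_Pair continuous_on_id z)
  moreover have "(\<lambda>r. (r, z r)) ` {0..1} \<subseteq> {0..1} \<times> UNIV" by auto
  ultimately show ?thesis using continuous_on_compose2[OF G_cont] by fastforce
qed

definition vel :: "(real \<Rightarrow> real) \<Rightarrow> real \<Rightarrow> real" where
  "vel z s = y1 + integral {0..s} (\<lambda>r. G r (z r))"

definition picard :: "(real \<Rightarrow> real) \<Rightarrow> real \<Rightarrow> real" where
  "picard z t = y0 + integral {0..t} (vel z)"

lemma vel_deriv:
  "continuous_on {0..1} z \<Longrightarrow> t \<in> {0..1} \<Longrightarrow>
    (vel z has_real_derivative G t (z t)) (at t within {0..1})"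
  unfolding vel_def
  by (rule DERIV_cong[OF DERIV_add[OF DERIV_const integral_has_real_derivative[OF G_comp_cont]]])
    auto

lemma vel_cont: "continuous_on {0..1} z \<Longrightarrow> continuous_on {0..1} (vel z)"
  by (rule DERIV_continuous_on[OF vel_deriv])

lemma picard_deriv:
  "continuous_on {0..1} z \<Longrightarrow> t \<in> {0..1} \<Longrightarrow>
    (picard z has_real_derivative vel z t) (at t within {0..1})"
  unfolding picard_def
  by (rule DERIV_cong[OF DERIV_add[OF DERIV_const integral_has_real_derivative[OF vel_cont]]])
    auto

lemma picard_cong:
  assumes "\<And>s. s \<in> {0..1} \<Longrightarrow> z1 s = z2 s" and t: "t \<in> {0..1}"
  shows "picard z1 t = picard z2 t"
proof -
  have "vel z1 s = vel z2 s" if "s \<in> {0..1}" for s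
    unfolding vel_def using that assms(1) by (intro arg_cong2[where f="(+)"] refl integral_cong) auto
  then show ?thesis
    unfolding picard_def using t by (intro arg_cong2[where f="(+)"] refl integral_cong) auto
qed

lemma picard_contraction:
  assumes z: "continuous_on {0..1} z1" "continuous_on {0..1} z2"
    and b: "\<And>r. r \<in> {0..1} \<Longrightarrow> \<bar>z1 r - z2 r\<bar> \<le> d * exp (lam * r)"
    and t: "t \<in> {0..1}"
  shows "\<bar>picard z1 t - picard z2 t\<bar> \<le> d / 2 * exp (lam * t)"
proof -
  have d0: "0 \<le> d" using b[of 0] by simp
  have Gb: "\<bar>G r (z1 r) - G r (z2 r)\<bar> \<le> (L * d) * exp (lam * r)" if "r \<in> {0..1}" for r
    using G_lip[OF that, of "z1 r" "z2 r"] mult_left_mono[OF b[OF that] L_nonneg]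
    by (simp add: mult.assoc)
  have "\<bar>vel z1 s - vel z2 s\<bar> \<le> (L * d / lam) * exp (lam * s)" if "s \<in> {0..1}" for s
    using exp_weighted_integral_diff_bound[OF lam_pos that G_comp_cont[OF z(1)]
        G_comp_cont[OF z(2)] Gb]
    by (simp add: vel_def)
  then have "\<bar>picard z1 t - picard z2 t\<bar> \<le> (L * d / lam) * exp (lam * t) / lam"
    using exp_weighted_integral_diff_bound[OF lam_pos t vel_cont[OF z(1)] vel_cont[OF z(2)],
        of "L * d / lam"]
    by (simp add: picard_def)
  also have "\<dots> = (L / lam^2) * d * exp (lam * t)" by (simp add: power2_eq_square)
  also have "\<dots> \<le> 1/2 * d * exp (lam * t)"
    using L_lam lam_pos d0 by (intro mult_right_mono) (auto simp: pos_divide_le_eq)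
  finally show ?thesis by simp
qed

lemma picard_approx:
  assumes yd: "\<And>t. t \<in> {0..1} \<Longrightarrow> (y has_real_derivative y' t) (at t within {0..1})"
    and y'd: "\<And>t. t \<in> {0..1} \<Longrightarrow> (y' has_real_derivative y'' t) (at t within {0..1})"
    and y''c: "continuous_on {0..1} y''"
    and init: "y 0 = y0" "y' 0 = y1"
    and K: "\<And>r. r \<in> {0..1} \<Longrightarrow> \<bar>G r (y r) - y'' r\<bar> \<le> K"
    and t: "t \<in> {0..1}"
  shows "\<bar>picard y t - y t\<bar> \<le> K"
proof -
  have yc: "continuous_on {0..1} y" by (rule DERIV_continuous_on[OF yd])
  have y'c: "continuous_on {0..1} y'" by (rule DERIV_continuous_on[OF y'd])
  have "\<bar>vel y s - y' s\<bar> \<le> K" if "s \<in> {0..1}" for s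
    using antiderivative_approx[OF y'd y''c G_comp_cont[OF yc] K that] init by (simp add: vel_def)
  then show ?thesis
    using antiderivative_approx[OF yd y'c vel_cont[OF yc] _ t] init by (simp add: picard_def)
qed

text \<open>The Picard operator conjugated by the weight \<open>exp (lam t)\<close>, as a self-map of the
  complete space of bounded continuous functions.\<close>

definition unweight :: "(real \<Rightarrow>\<^sub>C real) \<Rightarrow> real \<Rightarrow> real" where
  "unweight w s = exp (lam * clamp s) * w s"

definition weighted_picard :: "(real \<Rightarrow>\<^sub>C real) \<Rightarrow> (real \<Rightarrow>\<^sub>C real)" where
  "weighted_picard w = Bcontfun (\<lambda>t. exp (- lam * clamp t) * picard (unweight w) (clamp t))"

lemma unweight_cont: "continuous_on {0..1} (unweight w)"
  unfolding unweight_def clamp_def by (intro continuous_intros continuous_on_apply_bcontfun)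

lemma weighted_picard_apply:
  "weighted_picard w t = exp (- lam * clamp t) * picard (unweight w) (clamp t)"
proof -
  let ?h = "\<lambda>t. exp (- lam * t) * picard (unweight w) t"
  have "continuous_on {0..1} ?h"
    using DERIV_continuous_on[OF picard_deriv[OF unweight_cont]]
    by (intro continuous_intros) auto
  then have "(\<lambda>t. ?h (clamp t)) \<in> bcontfun" by (rule clamp_bcontfun)
  then show ?thesis unfolding weighted_picard_def by (simp add: Bcontfun_inverse)
qed

lemma weighted_picard_contraction:
  "dist (weighted_picard w1) (weighted_picard w2) \<le> 1/2 * dist w1 w2"
proof (rule dist_bound)
  fix t
  let ?d = "dist w1 w2"
  have "\<bar>unweight w1 r - unweight w2 r\<bar> \<le> ?d * exp (lam * r)" if "r \<in> {0..1}" for r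
  proof -
    have "\<bar>unweight w1 r - unweight w2 r\<bar> = exp (lam * r) * dist (w1 r) (w2 r)"
      using clamp_id[OF that] by (simp add: unweight_def abs_mult dist_real_def flip: right_diff_distrib)
    also have "\<dots> \<le> exp (lam * r) * ?d" using dist_bounded by (intro mult_left_mono) auto
    finally show ?thesis by (simp add: mult.commute)
  qed
  then have "\<bar>picard (unweight w1) (clamp t) - picard (unweight w2) (clamp t)\<bar>
      \<le> ?d / 2 * exp (lam * clamp t)"
    using picard_contraction[OF unweight_cont unweight_cont _ clamp_in] by blast
  then have "exp (- lam * clamp t) *
      \<bar>picard (unweight w1) (clamp t) - picard (unweight w2) (clamp t)\<bar>
      \<le> exp (- lam * clamp t) * (?d / 2 * exp (lam * clamp t))"
    by (rule mult_left_mono) simp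
  also have "\<dots> = ?d / 2" by (simp add: exp_minus field_simps)
  finally show "dist (weighted_picard w1 t) (weighted_picard w2 t) \<le> 1/2 * ?d"
    by (simp add: weighted_picard_apply dist_real_def abs_mult flip: right_diff_distrib)
qed

lemma fixed_point_solves:
  assumes fix_w: "weighted_picard w = w" and t: "t \<in> {0..1}"
  shows "(unweight w has_real_derivative vel (unweight w) t) (at t within {0..1})"
    and "(vel (unweight w) has_real_derivative G t (unweight w t)) (at t within {0..1})"
proof -
  have fixed: "picard (unweight w) s = unweight w s" if s: "s \<in> {0..1}" for s
    using arg_cong[OF fix_w, of "\<lambda>w. unweight w s"] clamp_id[OF s]
    by (simp add: unweight_def weighted_picard_apply exp_minus field_simps)
  show "(unweight w has_real_derivative vel (unweight w) t) (at t within {0..1})"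
    by (rule has_field_derivative_transform_within[OF picard_deriv[OF unweight_cont t], where d=1])
      (use t fixed in auto)
  show "(vel (unweight w) has_real_derivative G t (unweight w t)) (at t within {0..1})"
    by (rule vel_deriv[OF unweight_cont t])
qed

definition weight :: "(real \<Rightarrow> real) \<Rightarrow> (real \<Rightarrow>\<^sub>C real)" where
  "weight y = Bcontfun (\<lambda>t. exp (- lam * clamp t) * y (clamp t))"

lemma weight_apply:
  assumes yc: "continuous_on {0..1} y"
  shows "weight y t = exp (- lam * clamp t) * y (clamp t)"
proof -
  let ?h = "\<lambda>s. exp (- lam * s) * y s"
  have "continuous_on {0..1} ?h" by (intro continuous_intros yc)
  then have "(\<lambda>t. ?h (clamp t)) \<in> bcontfun" by (rule clamp_bcontfun)
  then show ?thesis unfolding weight_def by (simp add: Bcontfun_inverse)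
qed

lemma unweight_weight: "continuous_on {0..1} y \<Longrightarrow> s \<in> {0..1} \<Longrightarrow> unweight (weight y) s = y s"
  by (simp add: unweight_def weight_apply clamp_id exp_minus)

lemma weighted_picard_approx:
  assumes yd: "\<And>t. t \<in> {0..1} \<Longrightarrow> (y has_real_derivative y' t) (at t within {0..1})"
    and y'd: "\<And>t. t \<in> {0..1} \<Longrightarrow> (y' has_real_derivative y'' t) (at t within {0..1})"
    and y''c: "continuous_on {0..1} y''"
    and init: "y 0 = y0" "y' 0 = y1"
    and K: "\<And>r. r \<in> {0..1} \<Longrightarrow> \<bar>G r (y r) - y'' r\<bar> \<le> K"
  shows "dist (weighted_picard (weight y)) (weight y) \<le> K"
proof (rule dist_bound)
  fix t
  have yc: "continuous_on {0..1} y" by (rule DERIV_continuous_on[OF yd])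
  have "\<bar>picard y (clamp t) - y (clamp t)\<bar> \<le> K"
    by (rule picard_approx[OF yd y'd y''c init K clamp_in])
  moreover have "exp (- lam * clamp t) \<le> 1" using lam_pos clamp_in[of t] by auto
  ultimately have "exp (- lam * clamp t) * \<bar>picard y (clamp t) - y (clamp t)\<bar> \<le> K"
    by (metis abs_ge_zero dual_order.trans exp_ge_zero mult_left_le_one_le)
  then show "dist (weighted_picard (weight y) t) (weight y t) \<le> K"
    using picard_cong[OF unweight_weight[OF yc] clamp_in]
    by (simp add: weighted_picard_apply weight_apply[OF yc] dist_real_def abs_mult
        flip: right_diff_distrib)
qed

theorem exists_close_solution:
  assumes yd: "\<And>t. t \<in> {0..1} \<Longrightarrow> (y has_real_derivative y' t) (at t within {0..1})"
    and y'd: "\<And>t. t \<in> {0..1} \<Longrightarrow> (y' has_real_derivative y'' t) (at t within {0..1})"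
    and y''c: "continuous_on {0..1} y''"
    and init: "y 0 = y0" "y' 0 = y1"
    and K: "\<And>r. r \<in> {0..1} \<Longrightarrow> \<bar>G r (y r) - y'' r\<bar> \<le> K"
  shows "\<exists>z z'. \<forall>t\<in>{0..1}. (z has_real_derivative z' t) (at t within {0..1})
     \<and> (z' has_real_derivative G t (z t)) (at t within {0..1}) \<and> \<bar>z t - y t\<bar> \<le> 2 * K * exp lam"
proof -
  obtain w where fix_w: "weighted_picard w = w"
    using banach_fix_type[of "1/2" weighted_picard] weighted_picard_contraction by auto
  have yc: "continuous_on {0..1} y" by (rule DERIV_continuous_on[OF yd])
  have "dist w (weight y)
      \<le> dist (weighted_picard w) (weighted_picard (weight y)) + dist (weighted_picard (weight y)) (weight y)"
    using dist_triangle[of "weighted_picard w" "weight y" "weighted_picard (weight y)"] fix_w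
    by simp
  then have dist_w: "dist w (weight y) \<le> 2 * K"
    using weighted_picard_contraction[of w "weight y"] weighted_picard_approx[OF yd y'd y''c init K]
      fix_w by simp
  have "\<bar>unweight w t - y t\<bar> \<le> 2 * K * exp lam" if t: "t \<in> {0..1}" for t
  proof -
    have "unweight w t - y t = exp (lam * t) * (w t - weight y t)"
      using unweight_weight[OF yc t] clamp_id[OF t] by (simp add: unweight_def right_diff_distrib)
    then have "\<bar>unweight w t - y t\<bar> = exp (lam * t) * dist (w t) (weight y t)"
      by (simp add: abs_mult dist_real_def)
    also have "\<dots> \<le> exp lam * (2 * K)"
      using t lam_pos dist_bounded[of w t "weight y"] dist_w
      by (intro mult_mono) (auto simp: mult_left_le)
    finally show ?thesis by (simp add: mult.commute)
  qed
  then show ?thesis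
    using fixed_point_solves[OF fix_w]
    by (intro exI[of _ "unweight w"] exI[of _ "vel (unweight w)"] ballI conjI) simp_all
qed

end

subsection \<open>The quarter-root substitution\<close>

definition potential :: "real \<Rightarrow> real \<Rightarrow> real \<Rightarrow> real" where
  "potential q q1 q2 = 1 / q * (5/4 * (q1 / q)^2 - q2 / q)"

lemma exp_neg_ln_quarter_pow4:
  fixes x :: real
  assumes "0 < x"
  shows "exp (- ln x / 4) ^ 4 = 1 / x"
proof -
  have "exp (- ln x / 4) ^ 4 = exp (of_nat 4 * (- ln x / 4))" by (rule exp_of_nat_mult[symmetric])
  also have "\<dots> = 1 / x" using assms by (simp add: exp_minus inverse_eq_divide)
  finally show ?thesis .
qed

lemma potential_inverse_fourth_power:
  fixes z z1 z2 :: real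
  assumes "z \<noteq> 0"
  shows "potential (1 / z^4) (-4 * z1 / z^5) (20 * z1^2 / z^6 - 4 * z2 / z^5) = 4 * z^3 * z2"
  using assms by (simp add: potential_def field_simps power2_eq_square)

lemma inverse_fourth_power_derivs:
  fixes z z' :: "real \<Rightarrow> real"
  assumes zd: "(z has_real_derivative z' t) (at t within S)"
    and z'd: "(z' has_real_derivative z'' t) (at t within S)"
    and z0: "z t \<noteq> 0"
  shows "((\<lambda>t. 1 / (z t)^4) has_real_derivative -4 * z' t / (z t)^5) (at t within S)"
    and "((\<lambda>t. -4 * z' t / (z t)^5) has_real_derivative
          20 * (z' t)^2 / (z t)^6 - 4 * z'' t / (z t)^5) (at t within S)"
  using zd z'd z0
  by (auto intro!: derivative_eq_intros simp: field_simps eval_nat_numeral)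

lemma quarter_root_ode:
  fixes q q' q'' :: "real \<Rightarrow> real"
  assumes pos: "0 < q t"
    and qd: "(q has_real_derivative q' t) (at t)"
    and q'd: "(q' has_real_derivative q'' t) (at t)"
  defines "y \<equiv> \<lambda>t. exp (- ln (q t) / 4)"
  shows "(y has_real_derivative - q' t * y t / (4 * q t)) (at t)"
    and "((\<lambda>t. - q' t * y t / (4 * q t)) has_real_derivative
          potential (q t) (q' t) (q'' t) / (4 * (y t)^3)) (at t)"
proof -
  show yd: "(y has_real_derivative - q' t * y t / (4 * q t)) (at t)"
    unfolding y_def using pos qd by (auto intro!: derivative_eq_intros simp: field_simps)
  have y_pos: "0 < y t" unfolding y_def by simp
  have y4: "(y t)^4 = 1 / q t" unfolding y_def using exp_neg_ln_quarter_pow4[OF pos] .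
  have "((\<lambda>t. - q' t * y t / (4 * q t)) has_real_derivative
      - (q'' t * y t + q' t * (- q' t * y t / (4 * q t))) / (4 * q t)
      + q' t * y t * (4 * q' t) / (4 * q t)^2) (at t)"
    using pos qd q'd yd by (auto intro!: derivative_eq_intros simp: field_simps power2_eq_square)
  moreover have "- (q'' t * y t + q' t * (- q' t * y t / (4 * q t))) / (4 * q t)
      + q' t * y t * (4 * q' t) / (4 * q t)^2 = y t * (5 * (q' t)^2 / (16 * (q t)^2) - q'' t / (4 * q t))"
    using pos by (simp add: field_simps power2_eq_square)
  moreover have "potential (q t) (q' t) (q'' t) / (4 * (y t)^3)
      = y t * (5 * (q' t)^2 / (16 * (q t)^2) - q'' t / (4 * q t))"
  proof -
    have y3: "1 / (y t)^3 = q t * y t"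
      using y4 y_pos pos by (simp add: field_simps eval_nat_numeral)
    have "potential (q t) (q' t) (q'' t) / (4 * (y t)^3)
        = potential (q t) (q' t) (q'' t) * (1 / (y t)^3) / 4"
      by simp
    also have "\<dots> = potential (q t) (q' t) (q'' t) * (q t * y t) / 4"
      unfolding y3 ..
    also have "\<dots> = y t * (5 * (q' t)^2 / (16 * (q t)^2) - q'' t / (4 * q t))"
      using pos by (simp add: potential_def field_simps power2_eq_square)
    finally show ?thesis .
  qed
  ultimately show "((\<lambda>t. - q' t * y t / (4 * q t)) has_real_derivative
      potential (q t) (q' t) (q'' t) / (4 * (y t)^3)) (at t)" by simp
qed

lemma smooth_on_UNIV_second_deriv:
  assumes "smooth_on UNIV q"
  shows "(q has_real_derivative deriv q t) (at t)"
    and "(deriv q has_real_derivative deriv (deriv q) t) (at t)"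
    and "continuous_on UNIV (deriv (deriv q))"
proof -
  obtain D where D: "D 0 = q" "\<And>n t. (D n has_real_derivative D (Suc n) t) (at t)"
    using assms unfolding smooth_on_def deriv_seq_def by auto
  have D1: "deriv q = D 1" using D by (intro ext DERIV_imp_deriv) (metis One_nat_def)
  have D2: "deriv (D 1) = D 2" using D(2)[of 1] by (intro ext DERIV_imp_deriv) (simp add: numeral_2_eq_2)
  show "(q has_real_derivative deriv q t) (at t)" using D D1 by (metis One_nat_def)
  show "(deriv q has_real_derivative deriv (deriv q) t) (at t)"
    using D(2)[of 1] D1 D2 by (simp add: numeral_2_eq_2)
  show "continuous_on UNIV (deriv (deriv q))"
    using DERIV_continuous_on[of UNIV "D 2" "\<lambda>t. D 3 t"] D(2)[of 2] D1 D2
    by (simp add: numeral_3_eq_3 numeral_2_eq_2)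
qed

lemma quarter_root_reference:
  fixes q y p :: "real \<Rightarrow> real"
  assumes q_smooth: "smooth_on UNIV q" and q_pos: "\<And>t. 0 < q t"
    and y_eq: "\<And>t. y t = exp (- ln (q t) / 4)"
    and p_eq: "\<And>t. p t = potential (q t) (deriv q t) (deriv (deriv q) t)"
  obtains y' where "\<And>t. (y has_real_derivative y' t) (at t)"
    and "\<And>t. (y' has_real_derivative p t / (4 * (y t)^3)) (at t)"
    and "continuous_on UNIV (\<lambda>t. p t / (4 * (y t)^3))"
    and "\<And>t. q t = 1 / (y t)^4"
proof
  note q_derivs = smooth_on_UNIV_second_deriv[OF q_smooth]
  have y: "y = (\<lambda>t. exp (- ln (q t) / 4))" and p: "p = (\<lambda>t. potential (q t) (deriv q t) (deriv (deriv q) t))"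
    using y_eq p_eq by auto
  let ?y' = "\<lambda>t. - deriv q t * y t / (4 * q t)"
  show yd: "(y has_real_derivative ?y' t) (at t)"
    and "(?y' has_real_derivative p t / (4 * (y t)^3)) (at t)" for t
    unfolding y p by (rule quarter_root_ode[OF q_pos q_derivs(1,2)])+
  have "continuous_on UNIV q" "continuous_on UNIV (deriv q)" "continuous_on UNIV y"
    by (rule DERIV_continuous_on[OF q_derivs(1)] DERIV_continuous_on[OF q_derivs(2)]
        DERIV_continuous_on[OF yd])+
  then show "continuous_on UNIV (\<lambda>t. p t / (4 * (y t)^3))"
    unfolding p potential_def using q_derivs(3) q_pos[THEN less_imp_neq]
    by (intro continuous_intros) (auto simp: y)
  show "q t = 1 / (y t)^4" for t
    using exp_neg_ln_quarter_pow4[OF q_pos[of t]] q_pos[of t] by (simp add: y)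
qed

subsection \<open>Solving the perturbed equation\<close>

text \<open>Cutting the right-hand side \<open>pb t / (4 z\<^sup>3)\<close> off below \<open>c\<close> makes it globally
  Lipschitz with constant \<open>3 P / (4 c\<^sup>4)\<close>.\<close>

lemma cutoff_lipschitz_ode2:
  fixes pb :: "real \<Rightarrow> real"
  assumes c: "0 < c" and pbc: "continuous_on {0..1} pb" and P: "\<And>r. r \<in> {0..1} \<Longrightarrow> \<bar>pb r\<bar> \<le> P"
    and lam: "0 < lam" "3 * P / (2 * c^4) \<le> lam^2"
  shows "lipschitz_ode2 (\<lambda>r u. pb r / (4 * (max u c)^3)) (3 * P / (4 * c^4)) lam"
proof
  have "continuous_on ({0..1} \<times> UNIV) (\<lambda>x. pb (fst x))"
    by (rule continuous_on_compose2[OF pbc continuous_on_fst[OF continuous_on_id]]) auto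
  moreover have "\<And>u. 4 * (max u c)^3 \<noteq> 0" using c by (simp add: max_def)
  ultimately have "continuous_on ({0..1} \<times> UNIV) (\<lambda>x. pb (fst x) / (4 * (max (snd x) c)^3))"
    by (intro continuous_intros) auto
  then show "continuous_on ({0..1} \<times> UNIV) (\<lambda>(r, u). pb r / (4 * (max u c)^3))"
    by (simp add: case_prod_beta)
next
  fix r u v :: real
  assume r: "r \<in> {0..1}"
  have P0: "0 \<le> P" using P[OF r] by linarith
  have eq: "pb r / (4 * (max u c)^3) - pb r / (4 * (max v c)^3)
      = pb r / 4 * (1 / (max u c)^3 - 1 / (max v c)^3)"
    by (simp add: right_diff_distrib)
  have "\<bar>pb r / (4 * (max u c)^3) - pb r / (4 * (max v c)^3)\<bar>
      = \<bar>pb r\<bar> / 4 * \<bar>1 / (max u c)^3 - 1 / (max v c)^3\<bar>"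
    unfolding eq abs_mult by simp
  also have "\<dots> \<le> P / 4 * (3 / c^4 * \<bar>max u c - max v c\<bar>)"
    using P[OF r] inverse_power_lipschitz[OF c, of "max u c" "max v c" 3]
    by (intro mult_mono) auto
  also have "\<dots> \<le> P / 4 * (3 / c^4 * \<bar>u - v\<bar>)"
    using P0 c by (intro mult_left_mono) (auto simp: max_def abs_if)
  also have "\<dots> = 3 * P / (4 * c^4) * \<bar>u - v\<bar>" by simp
  finally show "\<bar>pb r / (4 * (max u c)^3) - pb r / (4 * (max v c)^3)\<bar>
      \<le> 3 * P / (4 * c^4) * \<bar>u - v\<bar>" .
qed (use lam in \<open>simp_all add: field_simps\<close>)

lemma perturbed_quarter_root:
  fixes y y' y'' pb :: "real \<Rightarrow> real"
  assumes c: "0 < c" and lam: "0 < lam" "3 * P / (2 * c^4) \<le> lam^2"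
    and pbc: "continuous_on {0..1} pb" and P: "\<And>r. r \<in> {0..1} \<Longrightarrow> \<bar>pb r\<bar> \<le> P"
    and yd: "\<And>t. t \<in> {0..1} \<Longrightarrow> (y has_real_derivative y' t) (at t within {0..1})"
    and y'd: "\<And>t. t \<in> {0..1} \<Longrightarrow> (y' has_real_derivative y'' t) (at t within {0..1})"
    and y''c: "continuous_on {0..1} y''"
    and y_ge: "\<And>t. t \<in> {0..1} \<Longrightarrow> 2 * c \<le> y t"
    and defect: "\<And>t. t \<in> {0..1} \<Longrightarrow> \<bar>pb t - 4 * (y t)^3 * y'' t\<bar> \<le> \<delta>"
    and small: "\<delta> * exp lam / (2 * c^3) \<le> c"
  shows "\<exists>z z'. \<forall>t\<in>{0..1}. (z has_real_derivative z' t) (at t within {0..1})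
    \<and> (z' has_real_derivative pb t / (4 * (z t)^3)) (at t within {0..1})
    \<and> c \<le> z t \<and> \<bar>z t - y t\<bar> \<le> \<delta> * exp lam / (2 * c^3)"
proof -
  let ?G = "\<lambda>r u. pb r / (4 * (max u c)^3)"
  interpret lipschitz_ode2 ?G "3 * P / (4 * c^4)" lam "y 0" "y' 0"
    by (rule cutoff_lipschitz_ode2[OF c pbc P lam])
  have "\<bar>?G r (y r) - y'' r\<bar> \<le> \<delta> / (4 * c^3)" if r: "r \<in> {0..1}" for r
  proof -
    have y: "max (y r) c = y r" "c \<le> y r" using y_ge[OF r] c by auto
    have "?G r (y r) - y'' r = (pb r - 4 * (y r)^3 * y'' r) / (4 * (y r)^3)"
      using y c by (simp add: field_simps)
    then have "\<bar>?G r (y r) - y'' r\<bar> \<le> \<delta> / (4 * (y r)^3)"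
      using defect[OF r] y c by (simp add: abs_divide divide_right_mono)
    also have "\<dots> \<le> \<delta> / (4 * c^3)"
      using y c defect[OF r] by (intro divide_left_mono mult_left_mono power_mono) auto
    finally show ?thesis .
  qed
  then obtain z z' where z: "\<forall>t\<in>{0..1}. (z has_real_derivative z' t) (at t within {0..1})
     \<and> (z' has_real_derivative ?G t (z t)) (at t within {0..1})
     \<and> \<bar>z t - y t\<bar> \<le> 2 * (\<delta> / (4 * c^3)) * exp lam"
    using exists_close_solution[OF yd y'd y''c refl refl] by blast
  have close: "\<bar>z t - y t\<bar> \<le> \<delta> * exp lam / (2 * c^3)" if "t \<in> {0..1}" for t
    using z that by (simp add: field_simps)
  have "c \<le> z t" if "t \<in> {0..1}" for t
    using close[OF that] y_ge[OF that] small by linarith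
  then show ?thesis
    using z close by (intro exI[of _ z] exI[of _ z']) (auto simp: max_absorb1)
qed

subsection \<open>Smoothness of the new coefficient\<close>

lemma ode_solution_Ck_on:
  assumes pb: "\<And>n. Ck_on S n pb"
    and zd: "\<And>t. t \<in> S \<Longrightarrow> (z has_real_derivative z' t) (at t within S)"
    and z'd: "\<And>t. t \<in> S \<Longrightarrow> (z' has_real_derivative pb t / (4 * (z t)^3)) (at t within S)"
    and z0: "\<And>t. t \<in> S \<Longrightarrow> z t \<noteq> 0"
  shows "Ck_on S n z"
proof -
  have "Ck_on S n z \<and> Ck_on S n z'"
  proof (induction n)
    case 0
    then show ?case by simp
  next
    case (Suc n)
    then have zn: "Ck_on S n z" and z'n: "Ck_on S n z'" by auto
    have "\<forall>t\<in>S. z t \<noteq> 0" using z0 by blast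
    then have "Ck_on S n (\<lambda>t. pb t * inverse (z t) * inverse (z t) * inverse (z t) * (1/4))"
      by (intro Ck_on_mult Ck_on_inverse pb Ck_on_const zn)
    moreover have "\<forall>t\<in>S. pb t * inverse (z t) * inverse (z t) * inverse (z t) * (1/4)
        = pb t / (4 * (z t)^3)"
      using z0 by (simp add: power3_eq_cube field_simps)
    ultimately have z''n: "Ck_on S n (\<lambda>t. pb t / (4 * (z t)^3))"
      by (rule Ck_on_cong)
    have "Ck_on S (Suc n) z" using zd z'n by (auto intro!: exI[of _ z'])
    moreover have "Ck_on S (Suc n) z'"
      using z'd z''n by (auto intro!: exI[of _ "\<lambda>t. pb t / (4 * (z t)^3)"])
    ultimately show ?case ..
  qed
  then show ?thesis ..
qed

lemma inverse_fourth_power_solution: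
  assumes pb: "smooth_on {0..1} pb"
    and zd: "\<And>t. t \<in> {0..1} \<Longrightarrow> (z has_real_derivative z' t) (at t within {0..1})"
    and z'd: "\<And>t. t \<in> {0..1} \<Longrightarrow> (z' has_real_derivative pb t / (4 * (z t)^3)) (at t within {0..1})"
    and z0: "\<And>t. t \<in> {0..1} \<Longrightarrow> z t \<noteq> 0"
  shows "\<exists>D. deriv_seq {0..1} (\<lambda>t. 1 / (z t)^4) D
    \<and> (\<forall>t\<in>{0..1}. potential (D 0 t) (D 1 t) (D 2 t) = pb t)"
proof -
  obtain Dp where Dp: "deriv_seq {0..1} pb Dp" using pb unfolding smooth_on_def by blast
  then have "Ck_on {0..1} n pb" for n
    using deriv_seq_Ck_on[OF Dp, of n 0] unfolding deriv_seq_def by simp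
  then have z_Ck: "Ck_on {0..1} n z" for n using ode_solution_Ck_on zd z'd z0 by blast
  have "\<forall>t\<in>{0..1}. z t \<noteq> 0" using z0 by blast
  then have "Ck_on {0..1} n (\<lambda>t. inverse (z t) * inverse (z t) * inverse (z t) * inverse (z t))"
    for n by (intro Ck_on_mult Ck_on_inverse z_Ck)
  moreover have "\<forall>t\<in>{0..1}. inverse (z t) * inverse (z t) * inverse (z t) * inverse (z t)
      = 1 / (z t)^4"
    using z0 by (simp add: power4_eq_xxxx field_simps)
  ultimately have "Ck_on {0..1} n (\<lambda>t. 1 / (z t)^4)" for n
    by (rule Ck_on_cong)
  then obtain D where D: "deriv_seq {0..1} (\<lambda>t. 1 / (z t)^4) D"
    using Ck_on_all_imp_smooth_on[of 0 1] unfolding smooth_on_def by auto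
  have D_step: "(D n has_real_derivative D (Suc n) t) (at t within {0..1})" if "t \<in> {0..1}" for n t
    using D that unfolding deriv_seq_def by blast
  note qb_derivs = inverse_fourth_power_derivs[where z''="\<lambda>t. pb t / (4 * (z t)^3)",
      OF zd z'd z0]
  have D1: "D 1 t = -4 * z' t / (z t)^5" if t: "t \<in> {0..1}" for t
    using D_step[OF t, of 0] D qb_derivs(1)[OF t t t] t
    by (intro has_real_derivative_unique_interval[of 0 1 t]) (auto simp: deriv_seq_def)
  have "((\<lambda>t. -4 * z' t / (z t)^5) has_real_derivative D 2 t) (at t within {0..1})"
    if t: "t \<in> {0..1}" for t
  proof -
    have "(D 1 has_real_derivative D 2 t) (at t within {0..1})"
      using D_step[OF t, of 1] by (simp add: numeral_2_eq_2)
    then show ?thesis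
      by (rule has_field_derivative_transform_within[where d=1]) (use t D1 in auto)
  qed
  then have D2: "D 2 t = 20 * (z' t)^2 / (z t)^6 - 4 * (pb t / (4 * (z t)^3)) / (z t)^5"
    if t: "t \<in> {0..1}" for t
    using qb_derivs(2)[OF t t t] t that by (intro has_real_derivative_unique_interval[of 0 1 t]) auto
  have "potential (D 0 t) (D 1 t) (D 2 t) = pb t" if t: "t \<in> {0..1}" for t
    using potential_inverse_fourth_power[OF z0[OF t], of "z' t" "pb t / (4 * (z t)^3)"] z0[OF t]
      D D1[OF t] D2[OF t] by (simp add: deriv_seq_def)
  then show ?thesis using D by blast
qed

text \<open>A crude bound showing that \<open>exp k\<close> absorbs the growth factor \<open>exp (7 \<eta>2)\<close> of
  the stability estimate together with the polynomial loss \<open>512 \<eta>2\<^sup>2\<close>.\<close>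

lemma exp_dominates_quadratic:
  fixes e k :: real
  assumes e: "0 < e" and k: "8 * e^2 + 31 \<le> k"
  shows "exp (7 * e) * (512 * e^2) \<le> exp k"
proof -
  have "(2::real)^9 \<le> exp 1 ^ 9"
    by (rule power_mono) (use exp_ge_add_one_self[of 1] in auto)
  then have "512 \<le> exp (9::real)" using exp_of_nat_mult[of 9 "1::real"] by simp
  moreover have "e^2 \<le> exp (e^2)" using exp_ge_add_one_self[of "e^2"] by linarith
  ultimately have "exp (7 * e) * (512 * e^2) \<le> exp (7 * e) * (exp 9 * exp (e^2))"
    by (intro mult_left_mono mult_mono) auto
  also have "\<dots> = exp (7 * e + 9 + e^2)" by (simp add: exp_add)
  also have "\<dots> \<le> exp k"
  proof -
    have "0 \<le> 7 * (e - 1/2)^2" by simp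
    then have "7 * e \<le> 7 * e^2 + 2" by (simp add: power2_eq_square algebra_simps)
    then show ?thesis using k by simp
  qed
  finally show ?thesis .
qed

text \<open>All numerical facts needed in the final argument, for the choices
  \<open>1 / c\<^sup>4 = 16 \<eta>2\<close>, \<open>P = 2 \<eta>2\<close>, \<open>lam = 7 \<eta>2\<close> and defect \<open>\<delta> = \<epsilon> exp (- k)\<close>.\<close>

lemma constants_estimates:
  fixes \<eta>1 \<eta>2 \<epsilon> k c :: real
  assumes eta: "0 < \<eta>1" "\<eta>1 \<le> \<eta>2" and eps: "0 < \<epsilon>" "\<epsilon> < \<eta>1 / 2"
    and k: "k = 20 * (\<eta>2 / \<eta>1)^2 + 8 * \<eta>2^2 + 10 * (\<eta>2 / \<eta>1) + 1"
    and c: "0 < c" "1 / c^4 = 16 * \<eta>2"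
  shows "\<epsilon> * exp (- k) \<le> \<eta>2"
    and "3 * (2 * \<eta>2) / (2 * c^4) \<le> (7 * \<eta>2)^2"
    and "\<epsilon> * exp (- k) * exp (7 * \<eta>2) / (2 * c^3) \<le> c"
    and "4 / c^5 * (\<epsilon> * exp (- k) * exp (7 * \<eta>2) / (2 * c^3)) \<le> \<epsilon>"
proof -
  have "1 \<le> \<eta>2 / \<eta>1" using eta by simp
  then have k_ge: "8 * \<eta>2^2 + 31 \<le> k" using k one_le_power[of "\<eta>2 / \<eta>1" 2] by linarith
  then have "0 \<le> k" using zero_le_power2[of \<eta>2] by linarith
  then have "exp (- k) \<le> 1" by simp
  then show "\<epsilon> * exp (- k) \<le> \<eta>2" using eps eta mult_left_le[of "exp (- k)" \<epsilon>] by linarith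
  have "3 * (2 * \<eta>2) / (2 * c^4) = 3 * \<eta>2 * (1 / c^4)" by simp
  also have "\<dots> = 48 * \<eta>2^2" using c(2) by (simp add: power2_eq_square)
  finally show "3 * (2 * \<eta>2) / (2 * c^4) \<le> (7 * \<eta>2)^2" by (simp add: power2_eq_square)
  define E where "E = exp (- k) * exp (7 * \<eta>2)"
  have E: "0 < E" "512 * \<eta>2^2 * E \<le> 1"
    using exp_dominates_quadratic[of \<eta>2 k] eta k_ge
    by (auto simp: E_def exp_minus field_simps)
  show "\<epsilon> * exp (- k) * exp (7 * \<eta>2) / (2 * c^3) \<le> c"
  proof -
    have "\<epsilon> * E \<le> \<eta>2 * E" using eps eta E by (intro mult_right_mono) auto
    also have "\<dots> \<le> 1 / (8 * \<eta>2)"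
    proof -
      have "\<eta>2^2 * E \<le> 1 / 8" using E by simp
      then show ?thesis using eta by (simp add: field_simps power2_eq_square)
    qed
    also have "\<dots> = 2 * c^4" using c eta by (simp add: field_simps)
    finally show ?thesis using c by (simp add: E_def field_simps eval_nat_numeral)
  qed
  have "4 / c^5 * (\<epsilon> * E / (2 * c^3)) = \<epsilon> * (2 * E * (1 / c^4)^2)"
    using c by (simp add: field_simps eval_nat_numeral)
  also have "\<dots> = \<epsilon> * (512 * \<eta>2^2 * E)" using c by (simp add: power2_eq_square)
  also have "\<dots> \<le> \<epsilon>" using E eps by (simp add: mult_left_le)
  finally show "4 / c^5 * (\<epsilon> * exp (- k) * exp (7 * \<eta>2) / (2 * c^3)) \<le> \<epsilon>"
    by (simp add: E_def mult.assoc)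
qed

theorem lemma9p1:
  fixes q pb :: "real \<Rightarrow> real" and \<eta>1 \<eta>2 \<epsilon> k :: real
  assumes q_smooth: "smooth_on UNIV q"
    and q_pos: "\<And>t. q t > 0"
    and eta1: "\<eta>1 > 0" and eta2: "\<eta>2 > 0"
    and q_bounds: "\<And>t. 0 \<le> t \<Longrightarrow> t \<le> 1 \<Longrightarrow> \<eta>1 \<le> q t \<and> q t \<le> \<eta>2"
    and p_bound: "\<And>t. 0 \<le> t \<Longrightarrow> t \<le> 1 \<Longrightarrow>
       \<bar>1 / q t * (5/4 * (deriv q t / q t)^2 - deriv (deriv q) t / q t)\<bar> \<le> \<eta>2"
    and dq_bound: "\<And>t. 0 \<le> t \<Longrightarrow> t \<le> 1 \<Longrightarrow> \<bar>deriv q t\<bar> \<le> \<eta>2"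
    and k_def: "k = 20 * (\<eta>2 / \<eta>1)^2 + 8 * \<eta>2^2 + 10 * (\<eta>2 / \<eta>1) + 1"
    and eps: "0 < \<epsilon>" "\<epsilon> < \<eta>1 / 2"
    and pb_smooth: "smooth_on {0..1} pb"
    and pb_close: "\<And>t. 0 \<le> t \<Longrightarrow> t \<le> 1 \<Longrightarrow>
       \<bar>1 / q t * (5/4 * (deriv q t / q t)^2 - deriv (deriv q) t / q t) - pb t\<bar> \<le> \<epsilon> * exp (- k)"
  shows "\<exists>qb D. deriv_seq {0..1} qb D \<and>
     (\<forall>t\<in>{0..1}. 1 / qb t * (5/4 * (D 1 t / qb t)^2 - D 2 t / qb t) = pb t) \<and>
     (\<forall>t\<in>{0..1}. \<bar>q t - qb t\<bar> \<le> \<epsilon>)"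
proof -
  define p where "p t = potential (q t) (deriv q t) (deriv (deriv q) t)" for t
  define y where "y t = exp (- ln (q t) / 4)" for t
  define c where "c = exp (- ln \<eta>2 / 4) / 2"
  obtain y' where yd: "\<And>t. (y has_real_derivative y' t) (at t)"
    and y'd: "\<And>t. (y' has_real_derivative p t / (4 * (y t)^3)) (at t)"
    and y''c: "continuous_on UNIV (\<lambda>t. p t / (4 * (y t)^3))"
    and q_y: "\<And>t. q t = 1 / (y t)^4"
    using quarter_root_reference[OF q_smooth q_pos y_def p_def] by blast
  have c: "0 < c" "1 / c^4 = 16 * \<eta>2"
    using exp_neg_ln_quarter_pow4[OF eta2] by (simp_all add: c_def power_divide)
  have y_ge: "2 * c \<le> y t" if "t \<in> {0..1}" for t
    using q_bounds[of t] that q_pos[of t] by (simp add: y_def c_def)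
  have eta12: "\<eta>1 \<le> \<eta>2" using q_bounds[of 0] by simp
  note const_bounds = constants_estimates[OF eta1 eta12 eps k_def c]
  have p_pb: "\<bar>p t\<bar> \<le> \<eta>2" "\<bar>pb t - p t\<bar> \<le> \<epsilon> * exp (- k)" if "t \<in> {0..1}" for t
    using p_bound[of t] pb_close[of t] that unfolding p_def potential_def
    by (auto simp: abs_minus_commute)
  have pb: "\<bar>pb t\<bar> \<le> 2 * \<eta>2"
    "\<bar>pb t - 4 * (y t)^3 * (p t / (4 * (y t)^3))\<bar> \<le> \<epsilon> * exp (- k)" if "t \<in> {0..1}" for t
    using p_pb[OF that] const_bounds(1) by (auto simp: y_def)
  obtain z z' where z: "\<forall>t\<in>{0..1}. (z has_real_derivative z' t) (at t within {0..1})
      \<and> (z' has_real_derivative pb t / (4 * (z t)^3)) (at t within {0..1})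
      \<and> c \<le> z t \<and> \<bar>z t - y t\<bar> \<le> \<epsilon> * exp (- k) * exp (7 * \<eta>2) / (2 * c^3)"
    using perturbed_quarter_root[OF c(1) _ const_bounds(2) smooth_on_continuous_on[OF pb_smooth]
        pb(1) has_field_derivative_at_within[OF yd] has_field_derivative_at_within[OF y'd]
        continuous_on_subset[OF y''c] y_ge pb(2) const_bounds(3)] eta2
    by auto
  have "t \<in> {0..1} \<Longrightarrow> z t \<noteq> 0" for t using z c(1) by fastforce
  then obtain D where D: "deriv_seq {0..1} (\<lambda>t. 1 / (z t)^4) D"
    and pot: "\<forall>t\<in>{0..1}. potential (D 0 t) (D 1 t) (D 2 t) = pb t"
    using inverse_fourth_power_solution[OF pb_smooth] z by blast
  have close: "\<bar>q t - D 0 t\<bar> \<le> \<epsilon>" if t: "t \<in> {0..1}" for t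
  proof -
    have "\<bar>q t - D 0 t\<bar> \<le> 4 / c^5 * \<bar>y t - z t\<bar>"
      using inverse_power_lipschitz[OF c(1), of "y t" "z t" 4] y_ge[OF t] z t c(1) D
      by (simp add: q_y deriv_seq_def)
    also have "\<dots> \<le> 4 / c^5 * (\<epsilon> * exp (- k) * exp (7 * \<eta>2) / (2 * c^3))"
      using z t c(1) by (intro mult_left_mono) (auto simp: abs_minus_commute)
    also have "\<dots> \<le> \<epsilon>" by (rule const_bounds(4))
    finally show ?thesis .
  qed
  have "deriv_seq {0..1} (D 0) D" using D by (simp add: deriv_seq_def)
  then show ?thesis using pot close unfolding potential_def by blast
qed

end
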